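(* Assume $q<\ell$. Fix $Z_0\in S^{\ell}_{q,p}$ and $E_0\in\Lambda^{\ell}_{Z_0}$. Let $\mathcal{S}_0=\{E_0\}$ and for $j\ge1$ define inductively $$\mathcal{S}_j=\bigcup_{F\in\mathcal{S}_{j-1}}\{E\in N(\ell,m):\dim E=\ell,\ \dim(E\cap F)\ge\ell-1\}.$$ Then $$\bigcup_{E\in\mathcal{S}_q}Gr(q,E)=S^{\ell}_{q,p}.$$
   Context: Let $q<p$ and $q\le\ell\le(p+q)/2$ be positive integers, $m=p+q-\ell$. $Gr(q,p)$ is the Grassmannian of $q$-planes in $\mathbb{C}^{p+q}$; $\langle u,v\rangle_{\ell,m}=-\sum_{i=1}^{\ell}u_i\bar v_i+\sum_{i=\ell+1}^{p+q}u_i\bar v_i$; $S^{\ell}_{q,p}=\{Z\in Gr(q,p):\langle\cdot,\cdot\rangle_{\ell,m}|_Z=0\}$. $N(\ell,m)$ is the set of subspaces $F\subset\mathbb{C}^{p+q}$ with $\langle\cdot,\cdot\rangle_{\ell,m}|_F=0$, and for $F\in N(\ell,m)$ and $n\ge\dim F$, $\Lambda^n_F=\{E\in N(\ell,m):\dim E=n,\ F\subset E\}$. For a subspace $E$, $Gr(q,E)$ denotes the set of $q$-dimensional subspaces of $E$. *)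

theory Defs
  imports "HOL-Analysis.Analysis" "HOL-Library.Function_Algebras"
begin

text \<open>Vectors of C^N are modelled as functions nat => complex vanishing at all
indices >= N (coordinate i of the paper is index i-1 here).\<close>

definition cscale :: "complex \<Rightarrow> (nat \<Rightarrow> complex) \<Rightarrow> (nat \<Rightarrow> complex)" where
  "cscale c v = (\<lambda>i. c * v i)"

definition ambient :: "nat \<Rightarrow> (nat \<Rightarrow> complex) set" where
  "ambient N = {v. \<forall>i\<ge>N. v i = 0}"

definition csubspace :: "(nat \<Rightarrow> complex) set \<Rightarrow> bool" where
  "csubspace W = module.subspace cscale W"

definition cdim :: "(nat \<Rightarrow> complex) set \<Rightarrow> nat" where
  "cdim W = vector_space.dim cscale W"

definition herm :: "nat \<Rightarrow> nat \<Rightarrow> (nat \<Rightarrow> complex) \<Rightarrow> (nat \<Rightarrow> complex) \<Rightarrow> complex" where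
  "herm l m u v = - (\<Sum>i<l. u i * cnj (v i)) + (\<Sum>i\<in>{l..<l+m}. u i * cnj (v i))"

definition isotropic :: "nat \<Rightarrow> nat \<Rightarrow> (nat \<Rightarrow> complex) set \<Rightarrow> bool" where
  "isotropic l m F \<longleftrightarrow> (\<forall>u\<in>F. \<forall>v\<in>F. herm l m u v = 0)"

definition Grass :: "nat \<Rightarrow> nat \<Rightarrow> (nat \<Rightarrow> complex) set set" where
  "Grass q p = {Z. csubspace Z \<and> Z \<subseteq> ambient (p+q) \<and> cdim Z = q}"

text \<open>S^l_{q,p}, with m = p+q-l.\<close>
definition Sset :: "nat \<Rightarrow> nat \<Rightarrow> nat \<Rightarrow> (nat \<Rightarrow> complex) set set" where
  "Sset l q p = {Z \<in> Grass q p. isotropic l (p+q-l) Z}"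

definition Nset :: "nat \<Rightarrow> nat \<Rightarrow> (nat \<Rightarrow> complex) set set" where
  "Nset l m = {F. csubspace F \<and> F \<subseteq> ambient (l+m) \<and> isotropic l m F}"

definition Lambda :: "nat \<Rightarrow> nat \<Rightarrow> nat \<Rightarrow> (nat \<Rightarrow> complex) set \<Rightarrow> (nat \<Rightarrow> complex) set set" where
  "Lambda l m n F = {E \<in> Nset l m. cdim E = n \<and> F \<subseteq> E}"

definition GrE :: "nat \<Rightarrow> (nat \<Rightarrow> complex) set \<Rightarrow> (nat \<Rightarrow> complex) set set" where
  "GrE q E = {Z. csubspace Z \<and> Z \<subseteq> E \<and> cdim Z = q}"

fun Sfam :: "nat \<Rightarrow> nat \<Rightarrow> (nat \<Rightarrow> complex) set \<Rightarrow> nat \<Rightarrow> (nat \<Rightarrow> complex) set set" where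
  "Sfam l m E0 0 = {E0}"
| "Sfam l m E0 (Suc j) =
     (\<Union>F\<in>Sfam l m E0 j. {E \<in> Nset l m. cdim E = l \<and> cdim (E \<inter> F) \<ge> l - 1})"

end

theory Submission imports Defs begin

text \<open>Starting from \<open>E\<^sub>0\<close>, one walks towards a given isotropic \<open>q\<close>-plane \<open>Z\<close> through maximal
isotropic subspaces.  If \<open>Z \<not>\<subseteq> F\<close> for the current \<open>F\<close>, pick \<open>v \<in> Z - F\<close> and replace \<open>F\<close> by
\<open>F' = span (v, F \<inter> v\<^sup>\<perp>)\<close>.  Since \<open>v\<close> is isotropic, \<open>F'\<close> is isotropic; since \<open>F \<inter> v\<^sup>\<perp>\<close> is a
hyperplane of \<open>F\<close> not containing \<open>v\<close>, \<open>dim F' \<ge> l\<close>, while every isotropic subspace has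
dimension at most \<open>l\<close> (it projects injectively onto the negative coordinates).  So \<open>F'\<close> is a
neighbour of \<open>F\<close> in the sense of the families \<open>S\<^sub>j\<close>, and \<open>F' \<inter> Z\<close> contains
\<open>span (v, F \<inter> Z)\<close>, so it grows by one dimension.  After \<open>q\<close> steps \<open>Z \<subseteq> F\<close>.\<close>

interpretation V: vector_space cscale
  by unfold_locales (auto simp: cscale_def fun_eq_iff algebra_simps)

definition unit_vec :: "nat \<Rightarrow> nat \<Rightarrow> complex" where
  "unit_vec i = (\<lambda>j. if j = i then 1 else 0)"

lemma sum_apply_fun: "(\<Sum>i\<in>A. (f i :: nat \<Rightarrow> complex)) j = (\<Sum>i\<in>A. f i j)"
  by (induction A rule: infinite_finite_induct) auto

lemma ambient_subset_span_unit_vec: "ambient N \<subseteq> V.span (unit_vec ` {..<N})"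
proof
  fix v assume v: "v \<in> ambient N"
  have "v = (\<Sum>i<N. cscale (v i) (unit_vec i))"
    using v by (auto simp: fun_eq_iff sum_apply_fun cscale_def unit_vec_def ambient_def
        if_distrib cong: if_cong)
  also have "\<dots> \<in> V.span (unit_vec ` {..<N})"
    by (intro V.span_sum V.span_scale V.span_base) auto
  finally show "v \<in> V.span (unit_vec ` {..<N})" .
qed

lemma subspace_ambient: "V.subspace (ambient N)"
  by (auto simp: V.subspace_def ambient_def cscale_def)

lemma independent_ambient_card_le:
  assumes "V.independent B" "B \<subseteq> ambient N"
  shows "finite B \<and> card B \<le> N"
proof -
  have "finite B \<and> card B \<le> card (unit_vec ` {..<N})"
    using V.independent_span_bound ambient_subset_span_unit_vec assms by blast
  moreover have "card (unit_vec ` {..<N}) \<le> N"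
    using card_image_le[of "{..<N}" unit_vec] by simp
  ultimately show ?thesis by linarith
qed

lemma independent_card_le_dim_ambient:
  assumes "V.independent C" "C \<subseteq> W" "W \<subseteq> ambient N"
  shows "finite C \<and> card C \<le> V.dim W"
proof -
  obtain B where B: "C \<subseteq> B" "B \<subseteq> W" "V.independent B" "W \<subseteq> V.span B"
    using V.maximal_independent_subset_extend assms(1,2) by blast
  have "finite B" using independent_ambient_card_le B(2,3) assms(3) by blast
  moreover have "card B = V.dim W" using V.basis_card_eq_dim B(2-4) by blast
  ultimately show ?thesis using B(1) card_mono finite_subset by metis
qed

lemma finite_basis_ambient:
  assumes "W \<subseteq> ambient N"
  obtains B where "finite B" "B \<subseteq> W" "V.independent B" "W \<subseteq> V.span B" "card B = V.dim W"
  by (metis V.basis_exists assms independent_ambient_card_le subset_trans)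

lemma dim_mono_ambient:
  assumes "U \<subseteq> W" "W \<subseteq> ambient N"
  shows "V.dim U \<le> V.dim W"
proof -
  obtain B where "B \<subseteq> U" "V.independent B" "card B = V.dim U"
    by (rule V.basis_exists)
  then show ?thesis using independent_card_le_dim_ambient assms by (metis subset_trans)
qed

lemma subspace_eq_if_dim_ge:
  assumes "V.subspace U" "U \<subseteq> W" "W \<subseteq> ambient N" "V.dim W \<le> V.dim U"
  shows "U = W"
proof (rule ccontr)
  assume "U \<noteq> W"
  then obtain w where w: "w \<in> W" "w \<notin> U" using assms(2) by blast
  obtain B where B: "finite B" "B \<subseteq> U" "V.independent B" "U \<subseteq> V.span B" "card B = V.dim U"
    using finite_basis_ambient assms(2,3) by (metis subset_trans)
  have "w \<notin> V.span B" using V.span_minimal[OF B(2) assms(1)] w(2) by blast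
  then have "V.independent (insert w B)" using V.independent_insertI B(3) by blast
  moreover have "insert w B \<subseteq> W" using w B(2) assms(2) by blast
  ultimately have "card (insert w B) \<le> V.dim W"
    using independent_card_le_dim_ambient assms(3) by blast
  moreover have "w \<notin> B" using w B(2) by blast
  ultimately show False using B(1,5) assms(4) by simp
qed

lemma dim_span_insert_ambient:
  assumes "V.subspace U" "U \<subseteq> ambient N" "x \<notin> U"
  shows "V.dim (V.span (insert x U)) = V.dim U + 1"
proof -
  obtain B where B: "finite B" "B \<subseteq> U" "V.independent B" "U \<subseteq> V.span B" "card B = V.dim U"
    by (rule finite_basis_ambient[OF assms(2)])
  have "V.span B = U" using V.span_subspace B(2,4) assms(1) .
  then have "V.span (insert x U) = V.span (insert x B)"
    by (simp add: V.span_insert V.span_eq_iff[THEN iffD2, OF assms(1)])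
  moreover have "x \<notin> B" using B(2) assms(3) by blast
  moreover have "V.independent (insert x B)"
    using V.independent_insertI B(3) assms(3) \<open>V.span B = U\<close> by blast
  ultimately show ?thesis
    using B(1,5) by (simp add: V.dim_eq_card_independent)
qed

lemma herm_add_left: "herm l m (u + u') v = herm l m u v + herm l m u' v"
  by (simp add: herm_def sum.distrib algebra_simps)

lemma herm_diff_left: "herm l m (u - u') v = herm l m u v - herm l m u' v"
  by (simp add: herm_def sum_subtractf algebra_simps)

lemma herm_cscale_left: "herm l m (cscale c u) v = c * herm l m u v"
  by (simp add: herm_def cscale_def sum_distrib_left algebra_simps)

lemma herm_commute: "herm l m v u = cnj (herm l m u v)"
  by (simp add: herm_def mult.commute)

lemma herm_self:
  "herm l m w w = of_real ((\<Sum>i\<in>{l..<l+m}. (cmod (w i))\<^sup>2) - (\<Sum>i<l. (cmod (w i))\<^sup>2))"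
  by (simp only: herm_def of_real_diff of_real_sum complex_norm_square) simp

definition herm_orth :: "nat \<Rightarrow> nat \<Rightarrow> (nat \<Rightarrow> complex) \<Rightarrow> (nat \<Rightarrow> complex) set" where
  "herm_orth l m v = {w. herm l m w v = 0}"

lemma subspace_herm_orth: "V.subspace (herm_orth l m v)"
  by (auto simp: V.subspace_def herm_orth_def herm_add_left herm_cscale_left)
    (simp add: herm_def)

lemma isotropic_span:
  assumes "\<And>a b. a \<in> S \<Longrightarrow> b \<in> S \<Longrightarrow> herm l m a b = 0"
  shows "isotropic l m (V.span S)"
proof -
  have "V.span S \<subseteq> herm_orth l m b" if "b \<in> S" for b
    using that assms by (intro V.span_minimal subspace_herm_orth) (auto simp: herm_orth_def)
  then have "S \<subseteq> herm_orth l m a" if "a \<in> V.span S" for a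
    using that by (auto simp: herm_orth_def herm_commute[of l m _ a])
  then have "V.span S \<subseteq> herm_orth l m a" if "a \<in> V.span S" for a
    using that by (intro V.span_minimal subspace_herm_orth)
  then show ?thesis by (auto simp: isotropic_def herm_orth_def)
qed

lemma herm_self_eq_0_imp_eq_0:
  assumes "w \<in> ambient (l+m)" "herm l m w w = 0" "\<And>i. i < l \<Longrightarrow> w i = 0"
  shows "w = 0"
proof -
  have "(\<Sum>i\<in>{l..<l+m}. (cmod (w i))\<^sup>2) - (\<Sum>i<l. (cmod (w i))\<^sup>2) = 0"
    using assms(2) by (simp only: herm_self of_real_eq_0_iff)
  moreover have "(\<Sum>i<l. (cmod (w i))\<^sup>2) = 0" using assms(3) by simp
  ultimately have "(\<Sum>i\<in>{l..<l+m}. (cmod (w i))\<^sup>2) = 0" by simp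
  then have "w i = 0" if "i \<in> {l..<l+m}" for i
    using that sum_nonneg_eq_0_iff[of "{l..<l+m}" "\<lambda>i. (cmod (w i))\<^sup>2"] by simp
  moreover have "w i = 0" if "l + m \<le> i" for i
    using assms(1) that by (simp add: ambient_def)
  ultimately show ?thesis
    using assms(3) by (metis atLeastLessThan_iff ext not_less zero_fun_def)
qed

lemma dim_isotropic_le:
  assumes "V.subspace W" "W \<subseteq> ambient (l+m)" "isotropic l m W"
  shows "V.dim W \<le> l"
proof -
  define head where "head w = (\<lambda>i. if i < l then w i else 0)" for w :: "nat \<Rightarrow> complex"
  have "module_hom cscale cscale head"
    by (auto simp: module_hom_iff module_iff_vector_space V.vector_space_axioms head_def
        cscale_def fun_eq_iff)
  moreover have "inj_on head W"
  proof (rule inj_onI)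
    fix x y assume "x \<in> W" "y \<in> W" "head x = head y"
    then have "x - y \<in> W" "\<And>i. i < l \<Longrightarrow> (x - y) i = 0"
      using V.subspace_diff[OF assms(1)] by (auto simp: head_def fun_eq_iff split: if_splits)
    then have "x - y = 0"
      using herm_self_eq_0_imp_eq_0[of "x - y"] assms(2,3) by (auto simp: isotropic_def)
    then show "x = y" by simp
  qed
  moreover obtain B where B: "finite B" "B \<subseteq> W" "V.independent B" "W \<subseteq> V.span B"
      "card B = V.dim W"
    by (rule finite_basis_ambient[OF assms(2)])
  ultimately have "V.independent (head ` B)" "card (head ` B) = V.dim W"
    using module_hom.independent_injective_image V.span_subspace[OF B(2,4) assms(1)]
      card_image inj_on_subset by metis+
  moreover have "head ` B \<subseteq> ambient l" by (auto simp: head_def ambient_def)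
  ultimately show ?thesis using independent_ambient_card_le by metis
qed

lemma dim_le_dim_inter_herm_orth:
  assumes "V.subspace F" "F \<subseteq> ambient N"
  shows "V.dim F \<le> V.dim (F \<inter> herm_orth l m v) + 1"
proof (cases "F \<subseteq> herm_orth l m v")
  case True
  then show ?thesis by (simp add: Int_absorb2)
next
  case False
  then obtain b where b: "b \<in> F" "herm l m b v \<noteq> 0" by (auto simp: herm_orth_def)
  let ?K = "F \<inter> herm_orth l m v"
  have K: "V.subspace ?K" "?K \<subseteq> ambient N" "b \<notin> ?K"
    using V.subspace_inter[OF assms(1) subspace_herm_orth] assms(2) b(2)
    by (auto simp: herm_orth_def)
  have "F \<subseteq> V.span (insert b ?K)"
  proof
    fix f assume f: "f \<in> F"
    define c where "c = herm l m f v / herm l m b v"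
    have "f - cscale c b \<in> F"
      using f b(1) assms(1) by (intro V.subspace_diff V.subspace_scale)
    moreover have "herm l m (f - cscale c b) v = 0"
      using b(2) by (simp add: c_def herm_diff_left herm_cscale_left)
    ultimately have "f - cscale c b \<in> V.span ?K"
      by (intro V.span_base) (simp add: herm_orth_def)
    then show "f \<in> V.span (insert b ?K)" by (auto simp only: V.span_breakdown_eq)
  qed
  moreover have "V.span (insert b ?K) \<subseteq> ambient N"
    using b(1) assms(2) by (intro V.span_minimal subspace_ambient) auto
  ultimately have "V.dim F \<le> V.dim (V.span (insert b ?K))"
    by (rule dim_mono_ambient)
  also have "\<dots> = V.dim ?K + 1" using dim_span_insert_ambient K .
  finally show ?thesis .
qed

definition neighbour :: "nat \<Rightarrow> nat \<Rightarrow> (nat \<Rightarrow> complex) set \<Rightarrow> (nat \<Rightarrow> complex) set \<Rightarrow> bool"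
  where "neighbour l m F E \<longleftrightarrow> E \<in> Nset l m \<and> cdim E = l \<and> l - 1 \<le> cdim (E \<inter> F)"

lemma Sfam_Suc_iff: "E \<in> Sfam l m E0 (Suc j) \<longleftrightarrow> (\<exists>F\<in>Sfam l m E0 j. neighbour l m F E)"
  by (auto simp: neighbour_def)

lemma Sfam_subset_Nset:
  assumes "E0 \<in> Nset l m" "cdim E0 = l" "E \<in> Sfam l m E0 j"
  shows "E \<in> Nset l m \<and> cdim E = l"
  using assms(3) by (induction j arbitrary: E) (use assms(1,2) in \<open>auto simp: neighbour_def\<close>)

lemma neighbour_refl: "F \<in> Nset l m \<Longrightarrow> cdim F = l \<Longrightarrow> neighbour l m F F"
  by (simp add: neighbour_def)

lemma exists_neighbour_through:
  assumes F: "F \<in> Nset l m" "cdim F = l"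
    and v: "v \<in> ambient (l+m)" "herm l m v v = 0" "v \<notin> F"
  obtains F' where "neighbour l m F F'" "v \<in> F'" "F \<inter> herm_orth l m v \<subseteq> F'"
proof -
  define K where "K = F \<inter> herm_orth l m v"
  define F' where "F' = V.span (insert v K)"
  have Fs: "V.subspace F" "F \<subseteq> ambient (l+m)" "isotropic l m F"
    using F(1) by (auto simp: Nset_def csubspace_def)
  have K: "V.subspace K" "K \<subseteq> ambient (l+m)" "v \<notin> K"
    unfolding K_def using V.subspace_inter[OF Fs(1) subspace_herm_orth] Fs(2) v(3) by auto
  have K_sub: "K \<subseteq> F'"
    unfolding F'_def by (rule subset_trans[OF subset_insertI V.span_superset])
  have iso: "isotropic l m F'"
    unfolding F'_def
  proof (rule isotropic_span)
    fix a b assume ab: "a \<in> insert v K" "b \<in> insert v K"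
    have "herm l m v k = 0" if "k \<in> K" for k
      using that herm_commute[of l m v k] by (simp add: K_def herm_orth_def)
    then show "herm l m a b = 0"
      using ab v(2) Fs(3) by (auto simp: K_def isotropic_def herm_orth_def)
  qed
  have amb: "F' \<subseteq> ambient (l+m)"
    unfolding F'_def using K(2) v(1) by (intro V.span_minimal subspace_ambient) auto
  have "V.dim F' = V.dim K + 1"
    unfolding F'_def using dim_span_insert_ambient K .
  moreover have "V.dim F' \<le> l"
    using dim_isotropic_le[OF _ amb iso] by (simp add: F'_def)
  moreover have "l \<le> V.dim K + 1"
    using dim_le_dim_inter_herm_orth[OF Fs(1,2)] F(2) by (simp add: K_def cdim_def)
  moreover have "V.dim K \<le> V.dim (F' \<inter> F)"
    using dim_mono_ambient[of K "F' \<inter> F" "l+m"] K_sub amb by (auto simp: K_def)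
  ultimately have "neighbour l m F F'"
    using iso amb by (simp add: neighbour_def Nset_def csubspace_def cdim_def F'_def)
  moreover have "v \<in> F'" by (simp add: F'_def V.span_base)
  ultimately show ?thesis using that K_sub K_def by blast
qed

lemma Sfam_meets:
  assumes E0: "E0 \<in> Nset l m" "cdim E0 = l" and Z: "Z \<in> Nset l m"
  shows "\<exists>F\<in>Sfam l m E0 j. min j (cdim Z) \<le> cdim (F \<inter> Z)"
proof (induction j)
  case 0
  then show ?case by simp
next
  case (Suc j)
  then obtain F where F: "F \<in> Sfam l m E0 j" "min j (cdim Z) \<le> cdim (F \<inter> Z)" by blast
  have FN: "F \<in> Nset l m" "cdim F = l" using Sfam_subset_Nset[OF E0 F(1)] by simp_all
  have Zs: "V.subspace Z" "Z \<subseteq> ambient (l+m)" "isotropic l m Z"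
    using Z by (simp_all add: Nset_def csubspace_def)
  show ?case
  proof (cases "Z \<subseteq> F")
    case True
    then have "F \<in> Sfam l m E0 (Suc j)" "cdim (F \<inter> Z) = cdim Z"
      using Sfam_Suc_iff F(1) neighbour_refl[OF FN] by (blast, simp add: Int_absorb1)
    then show ?thesis by (metis min.cobounded2 order.refl)
  next
    case False
    then obtain v where v: "v \<in> Z" "v \<notin> F" by blast
    have "herm l m v v = 0" using Zs(3) v(1) by (simp add: isotropic_def)
    then obtain F' where F': "neighbour l m F F'" "v \<in> F'" "F \<inter> herm_orth l m v \<subseteq> F'"
      using exists_neighbour_through[OF FN] v Zs(2) by blast
    have "V.subspace F'" using F'(1) by (simp add: neighbour_def Nset_def csubspace_def)
    then have F'Z: "V.subspace (F' \<inter> Z)" "F' \<inter> Z \<subseteq> ambient (l+m)"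
      using V.subspace_inter Zs(1,2) by blast+
    have FZ: "V.subspace (F \<inter> Z)" "F \<inter> Z \<subseteq> ambient (l+m)" "v \<notin> F \<inter> Z"
      using V.subspace_inter FN(1) Zs(1,2) v(2) by (auto simp: Nset_def csubspace_def)
    have "F \<inter> Z \<subseteq> herm_orth l m v"
      using Zs(3) v(1) by (auto simp: isotropic_def herm_orth_def)
    then have "V.span (insert v (F \<inter> Z)) \<subseteq> F' \<inter> Z"
      using F'(2,3) v(1) by (intro V.span_minimal F'Z(1)) auto
    then have "V.dim (V.span (insert v (F \<inter> Z))) \<le> V.dim (F' \<inter> Z)"
      using dim_mono_ambient F'Z(2) by blast
    then have "V.dim (F \<inter> Z) + 1 \<le> V.dim (F' \<inter> Z)"
      using dim_span_insert_ambient[OF FZ] by simp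
    then have "min (Suc j) (cdim Z) \<le> cdim (F' \<inter> Z)"
      using F(2) by (simp add: cdim_def)
    moreover have "F' \<in> Sfam l m E0 (Suc j)" using Sfam_Suc_iff F(1) F'(1) by blast
    ultimately show ?thesis by blast
  qed
qed

lemma subset_if_dim_inter_ge:
  assumes "V.subspace F" "V.subspace Z" "Z \<subseteq> ambient N" "V.dim Z \<le> V.dim (F \<inter> Z)"
  shows "Z \<subseteq> F"
  using subspace_eq_if_dim_ge[OF V.subspace_inter[OF assms(1,2)] _ assms(3,4)] by blast

lemma Sset_eq_Nset: "l \<le> p + q \<Longrightarrow> Sset l q p = {Z \<in> Nset l (p + q - l). cdim Z = q}"
  by (auto simp: Sset_def Grass_def Nset_def)

theorem lemma3p2:
  fixes p q l :: nat and Z0 E0 :: "(nat \<Rightarrow> complex) set"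
  assumes "0 < q" and "q < p" and "q \<le> l" and "2 * l \<le> p + q"
    and "q < l"
    and "Z0 \<in> Sset l q p"
    and "E0 \<in> Lambda l (p + q - l) l Z0"
  shows "(\<Union>E\<in>Sfam l (p + q - l) E0 q. GrE q E) = Sset l q p"
proof -
  let ?m = "p + q - l"
  have E0: "E0 \<in> Nset l ?m" "cdim E0 = l" using assms(7) by (simp_all add: Lambda_def)
  have Sset: "Sset l q p = {Z \<in> Nset l ?m. cdim Z = q}" using assms(4) Sset_eq_Nset by simp
  have "Sset l q p \<subseteq> (\<Union>E\<in>Sfam l ?m E0 q. GrE q E)"
  proof
    fix Z assume "Z \<in> Sset l q p"
    then have Z: "Z \<in> Nset l ?m" "cdim Z = q" by (simp_all add: Sset)
    then obtain E where E: "E \<in> Sfam l ?m E0 q" "q \<le> cdim (E \<inter> Z)"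
      using Sfam_meets[OF E0 Z(1), of q] by auto
    have "Z \<subseteq> E"
      using Z Sfam_subset_Nset[OF E0 E(1)] E(2)
      by (intro subset_if_dim_inter_ge[of E Z "l + ?m"]) (simp_all add: Nset_def csubspace_def cdim_def)
    then show "Z \<in> (\<Union>E\<in>Sfam l ?m E0 q. GrE q E)"
      using E(1) Z by (auto simp: GrE_def Nset_def)
  qed
  moreover have "GrE q E \<subseteq> Sset l q p" if "E \<in> Sfam l ?m E0 q" for E
  proof
    fix Z assume "Z \<in> GrE q E"
    moreover have "E \<in> Nset l ?m" using Sfam_subset_Nset[OF E0 that] by simp
    ultimately show "Z \<in> Sset l q p" unfolding Sset GrE_def Nset_def isotropic_def by blast
  qed
  ultimately show ?thesis by blast
qed

end
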